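(* Let $X=\{x_1,\dots,x_n\}\subseteq\mathbb{R}^d$ be a finite set of base points, let $\delta(\cdot,\cdot)$ be the distance function, and let $G=(V,E)$ be a directed graph index whose vertex set $V$ is identified with $X$. Let $q\in\mathbb{R}^d$ be a query and, for $1\le i\le n$, let $N_{i,q}$ denote the $i$-th nearest neighbour of $q$ in $X$ (so $\delta(N_{1,q},q)\le\delta(N_{2,q},q)\le\cdots$). Let $S\ge 1$ and $1\le i,j\le S$. If $N_{i,q}$ can reach $N_{j,q}$ (via a directed path) in the $S$-Neighboring Graph $NG_{S,q}$, then the Greedy Search algorithm run with query $q$, entry point $ep=N_{i,q}$ and search list size $L\ge S$ (and any result size $k\le L$) always visits (marks as visited) $N_{j,q}$.
   Context: $S$-Neighboring Graph: for a directed graph $G=(V,E)$ and query $q$, let $V_{S,q}=\{N_{1,q},\dots,N_{S,q}\}$; then $NG_{S,q}=(V_{S,q},E_{S,q})$ is the subgraph of $G$ induced by $V_{S,q}$. $Neighbors(G,u)$ denotes the set of out-neighbours of $u$ in $G$. Greedy Search (input: graph $G$, query $q$, result size $k$, entry point $ep$, search list size $L\ge k$): initialize a candidate set $C\leftarrow\{ep\}$ and a result set $R\leftarrow\{ep\}$, and mark $ep$ as visited. While $C\neq\emptyset$: pop from $C$ an element $u$ minimizing $\delta(u,q)$; set $d_{max}\leftarrow\max_{x\in R}\delta(x,q)$ (or $+\infty$ if $R=\emptyset$); if $\delta(u,q)>d_{max}$, stop the loop. Otherwise, for each $v\in Neighbors(G,u)$ that has not been visited: mark $v$ as visited; if $\delta(v,q)<d_{max}$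 or $|R|<L$, add $v$ to both $R$ and $C$; while $|R|>L$, remove from $R$ an element $x$ maximizing $\delta(x,q)$; then update $d_{max}\leftarrow\max_{x\in R}\delta(x,q)$. Finally return the $k$ points of $R$ closest to $q$. (Removing an element from $R$ does not remove it from $C$.) *)

theory Defs
  imports "HOL-Analysis.Analysis"
begin

definition neighbors :: "('p \<times> 'p) set \<Rightarrow> 'p \<Rightarrow> 'p set" where
  "neighbors E u = {v. (u, v) \<in> E}"

definition NG_vertices :: "(nat \<Rightarrow> 'p) \<Rightarrow> nat \<Rightarrow> 'p set" where
  "NG_vertices N S = N ` {1..S}"

definition NG_edges :: "('p \<times> 'p) set \<Rightarrow> (nat \<Rightarrow> 'p) \<Rightarrow> nat \<Rightarrow> ('p \<times> 'p) set" where
  "NG_edges E N S = E \<inter> (NG_vertices N S \<times> NG_vertices N S)"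

definition dmax_of :: "('p \<Rightarrow> real) \<Rightarrow> 'p set \<Rightarrow> ereal" where
  "dmax_of d R = (if R = {} then \<infinity> else ereal (Max (d ` R)))"

inductive trim :: "('p \<Rightarrow> real) \<Rightarrow> nat \<Rightarrow> 'p set \<Rightarrow> 'p set \<Rightarrow> bool"
  for d :: "'p \<Rightarrow> real" and L :: nat where
  trim_done: "card R \<le> L \<Longrightarrow> trim d L R R"
| trim_remove: "card R > L \<Longrightarrow> x \<in> R \<Longrightarrow> (\<forall>y\<in>R. d y \<le> d x)
     \<Longrightarrow> trim d L (R - {x}) R' \<Longrightarrow> trim d L R R'"

text \<open>States of Greedy Search: Outer C R visited; Inner C R visited dmax pending-neighbours;
  Done C R visited.\<close>
datatype 'p gs_state =
    Outer "'p set" "'p set" "'p set"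
  | Inner "'p set" "'p set" "'p set" ereal "'p set"
  | Done "'p set" "'p set" "'p set"

inductive gs_step :: "('p \<times> 'p) set \<Rightarrow> ('p \<Rightarrow> real) \<Rightarrow> nat \<Rightarrow> 'p gs_state \<Rightarrow> 'p gs_state \<Rightarrow> bool"
  for E :: "('p \<times> 'p) set" and d :: "'p \<Rightarrow> real" and L :: nat where
  gs_empty: "gs_step E d L (Outer {} R vis) (Done {} R vis)"
| gs_pop_stop: "u \<in> C \<Longrightarrow> (\<forall>w\<in>C. d u \<le> d w) \<Longrightarrow> ereal (d u) > dmax_of d R
     \<Longrightarrow> gs_step E d L (Outer C R vis) (Done (C - {u}) R vis)"
| gs_pop_go: "u \<in> C \<Longrightarrow> (\<forall>w\<in>C. d u \<le> d w) \<Longrightarrow> \<not> ereal (d u) > dmax_of d R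
     \<Longrightarrow> gs_step E d L (Outer C R vis) (Inner (C - {u}) R vis (dmax_of d R) (neighbors E u))"
| gs_skip: "v \<in> P \<Longrightarrow> v \<in> vis
     \<Longrightarrow> gs_step E d L (Inner C R vis dm P) (Inner C R vis dm (P - {v}))"
| gs_visit: "v \<in> P \<Longrightarrow> v \<notin> vis
     \<Longrightarrow> (R1, C1) = (if ereal (d v) < dm \<or> card R < L then (insert v R, insert v C) else (R, C))
     \<Longrightarrow> trim d L R1 R2
     \<Longrightarrow> gs_step E d L (Inner C R vis dm P) (Inner C1 R2 (insert v vis) (dmax_of d R2) (P - {v}))"
| gs_finish: "gs_step E d L (Inner C R vis dm {}) (Outer C R vis)"

definition gs_init :: "'p \<Rightarrow> 'p gs_state" where
  "gs_init ep = Outer {ep} {ep} {ep}"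

end

theory Submission
  imports Defs
begin

text \<open>The first S nearest neighbours of q are strictly closer to q than every other base point.
  Since the result list R holds up to L \<ge> S points and trimming always evicts a farthest point,
  a visited near point is never evicted; and an unvisited near point is always admitted,
  because a full list must contain a point farther than it. So every visited near point stays
  in R, hence is no farther than the current maximum of R, and is therefore popped from C before
  the stopping test can fire; popping it visits all its out-neighbours. At termination the
  visited set thus contains the entry point and is closed under the edges of NG_{S,q}.\<close>

lemma trim_subset: "trim d L R R' \<Longrightarrow> R' \<subseteq> R"
  by (induction rule: trim.induct) auto

lemma dmax_of_ge: "finite R \<Longrightarrow> u \<in> R \<Longrightarrow> ereal (d u) \<le> dmax_of d R"
  by (auto simp: dmax_of_def)

primrec visited :: "'p gs_state \<Rightarrow> 'p set" where
  "visited (Outer C R vis) = vis"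
| "visited (Inner C R vis dm P) = vis"
| "visited (Done C R vis) = vis"

lemma gs_step_visited_mono: "gs_step E d L s s' \<Longrightarrow> visited s \<subseteq> visited s'"
  by (induction rule: gs_step.induct) auto

lemma gs_steps_visited_mono: "(gs_step E d L)\<^sup>*\<^sup>* s s' \<Longrightarrow> visited s \<subseteq> visited s'"
  by (induction rule: rtranclp_induct) (auto dest: gs_step_visited_mono)

lemma rtrancl_Restr_closed:
  assumes "(a, b) \<in> (E \<inter> V \<times> V)\<^sup>*" and "a \<in> W" and "\<forall>u \<in> V \<inter> W. neighbors E u \<subseteq> W"
  shows "b \<in> W"
  using assms(1) by (induction rule: rtrancl_induct) (use assms(2,3) in \<open>auto simp: neighbors_def\<close>)

lemma sorted_enumeration_prefix_closer:
  fixes N :: "nat \<Rightarrow> 'a" and f :: "'a \<Rightarrow> 'b::order" and n S :: nat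
  assumes "bij_betw N {1..n} X"
    and "\<And>a b. 1 \<le> a \<Longrightarrow> a \<le> b \<Longrightarrow> b \<le> n \<Longrightarrow> f (N a) \<le> f (N b)"
    and "inj_on f X" and "S \<le> n" and "x \<in> X - N ` {1..S}" and "y \<in> N ` {1..S}"
  shows "f y < f x"
proof -
  obtain m where m: "m \<in> {1..n}" "x = N m"
    using assms(1,5) by (auto simp: bij_betw_def)
  obtain l where l: "l \<in> {1..S}" "y = N l"
    using assms(6) by blast
  have "S < m"
    using m assms(5) by (cases "m \<le> S") auto
  then have "f y \<le> f x"
    using assms(2)[of l m] l m by simp
  moreover have "y \<in> X"
    using l assms(1,4) by (auto simp: bij_betw_def)
  then have "f y \<noteq> f x"
    using assms(3,5,6) by (auto simp: inj_on_def)
  ultimately show ?thesis by (simp add: less_le)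
qed

locale greedy_search_near_set =
  fixes X :: "'p set" and E :: "('p \<times> 'p) set" and d :: "'p \<Rightarrow> real"
    and L :: nat and V :: "'p set"
  assumes finite_X: "finite X" and edges_in_X: "E \<subseteq> X \<times> X"
    and finite_V: "finite V" and card_V_le: "card V \<le> L"
    and near_closer: "\<And>x y. x \<in> X - V \<Longrightarrow> y \<in> V \<Longrightarrow> d y < d x"
begin

lemma trim_keeps_near: "trim d L R R' \<Longrightarrow> R \<subseteq> X \<Longrightarrow> R \<inter> V \<subseteq> R'"
proof (induction rule: trim.induct)
  case (trim_remove R x R')
  have "card V < card R"
    using card_V_le trim_remove.hyps(1) by linarith
  then have "\<not> R \<subseteq> V"
    using card_mono[OF finite_V] leD by blast
  then obtain w where w: "w \<in> R" "w \<notin> V" by blast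
  have "x \<notin> V"
  proof
    assume "x \<in> V"
    then have "d x < d w"
      using near_closer w trim_remove.prems by blast
    then show False
      using trim_remove.hyps(3) w(1) leD by blast
  qed
  then show ?case
    using trim_remove.IH trim_remove.prems by blast
qed simp

lemma near_point_admitted:
  assumes "v \<in> V" and "v \<notin> R" and "R \<subseteq> X"
  shows "ereal (d v) < dmax_of d R \<or> card R < L"
proof (rule disjCI)
  assume "\<not> card R < L"
  then have "card (V - {v}) < card R"
    using card_Diff1_less[OF finite_V assms(1)] card_V_le by linarith
  then have "\<not> R \<subseteq> V - {v}"
    using card_mono[of "V - {v}" R] finite_V leD by blast
  then obtain w where w: "w \<in> R" "w \<notin> V"
    using assms(2) by blast
  have "ereal (d v) < ereal (d w)"
    using near_closer w assms(1,3) by auto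
  also have "\<dots> \<le> dmax_of d R"
    using dmax_of_ge[OF finite_subset[OF assms(3) finite_X] w(1)] .
  finally show "ereal (d v) < dmax_of d R" .
qed

definition search_inv :: "'p set \<Rightarrow> 'p set \<Rightarrow> 'p set \<Rightarrow> 'p set \<Rightarrow> bool" where
  "search_inv C R vis P \<longleftrightarrow> R \<subseteq> vis \<and> vis \<subseteq> X \<and> P \<subseteq> X \<and> V \<inter> vis \<subseteq> R
     \<and> (\<forall>u \<in> V \<inter> vis - C. neighbors E u \<subseteq> vis \<union> P)"

primrec gs_inv :: "'p gs_state \<Rightarrow> bool" where
  "gs_inv (Outer C R vis) \<longleftrightarrow> search_inv C R vis {}"
| "gs_inv (Inner C R vis dm P) \<longleftrightarrow> search_inv C R vis P \<and> dm = dmax_of d R"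
| "gs_inv (Done C R vis) \<longleftrightarrow> (\<forall>u \<in> V \<inter> vis. neighbors E u \<subseteq> vis)"

lemma visit_preserves_search_inv:
  assumes inv: "search_inv C R vis P" and dm: "dm = dmax_of d R"
    and v: "v \<in> P" "v \<notin> vis"
    and admit: "(R1, C1) = (if ereal (d v) < dm \<or> card R < L
                              then (insert v R, insert v C) else (R, C))"
    and trim: "trim d L R1 R2"
  shows "search_inv C1 R2 (insert v vis) (P - {v})"
proof -
  have RX: "R \<subseteq> X" and vX: "v \<in> X" and vR: "v \<notin> R"
    using inv v by (auto simp: search_inv_def)
  have grow: "R \<subseteq> R1" "R1 \<subseteq> insert v R" "C \<subseteq> C1" "C1 \<subseteq> insert v C"
    using admit by (auto split: if_splits)
  have near_v: "v \<in> R1 \<and> v \<in> C1" if "v \<in> V"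
    using near_point_admitted[OF that vR RX] admit dm by auto
  have "R1 \<subseteq> X"
    using grow RX vX by blast
  then have "R2 \<subseteq> R1" "R1 \<inter> V \<subseteq> R2"
    using trim_subset[OF trim] trim_keeps_near[OF trim] by blast+
  then show ?thesis
    using inv grow near_v vX unfolding search_inv_def by blast
qed

lemma gs_step_preserves_inv: "gs_step E d L s s' \<Longrightarrow> gs_inv s \<Longrightarrow> gs_inv s'"
proof (induction rule: gs_step.induct)
  case (gs_pop_stop u C R vis)
  have "R \<subseteq> X"
    using gs_pop_stop.prems by (auto simp: search_inv_def)
  then have "finite R"
    using finite_X finite_subset by blast
  \<comment> \<open>a visited near point lies in R, so it is no farther than the maximum of R, which u exceeds\<close>
  have "w \<notin> C" if "w \<in> V \<inter> vis" for w
  proof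
    assume "w \<in> C"
    have "w \<in> R"
      using that gs_pop_stop.prems by (auto simp: search_inv_def)
    have "ereal (d u) \<le> ereal (d w)"
      using gs_pop_stop.hyps(2) \<open>w \<in> C\<close> by simp
    also have "\<dots> \<le> dmax_of d R"
      by (rule dmax_of_ge[OF \<open>finite R\<close> \<open>w \<in> R\<close>])
    finally show False
      using gs_pop_stop.hyps(3) leD by blast
  qed
  then show ?case
    using gs_pop_stop.prems by (auto simp: search_inv_def)
next
  case (gs_pop_go u C R vis)
  have "neighbors E u \<subseteq> X"
    using edges_in_X by (auto simp: neighbors_def)
  then show ?case
    using gs_pop_go.prems by (auto simp: search_inv_def)
next
  case (gs_visit v P vis R1 C1 dm R C R2)
  then show ?case
    using visit_preserves_search_inv[OF _ _ gs_visit.hyps] by simp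
qed (auto simp: search_inv_def)

lemma gs_steps_preserve_inv: "(gs_step E d L)\<^sup>*\<^sup>* s s' \<Longrightarrow> gs_inv s \<Longrightarrow> gs_inv s'"
  by (induction rule: rtranclp_induct) (auto dest: gs_step_preserves_inv)

theorem greedy_search_visits_near_reachable:
  assumes "ep \<in> X" and run: "(gs_step E d L)\<^sup>*\<^sup>* (gs_init ep) (Done C R vis)"
    and "(ep, v) \<in> (E \<inter> V \<times> V)\<^sup>*"
  shows "v \<in> vis"
proof -
  have "gs_inv (gs_init ep)"
    using assms(1) by (auto simp: gs_init_def search_inv_def)
  then have "\<forall>u \<in> V \<inter> vis. neighbors E u \<subseteq> vis"
    using gs_steps_preserve_inv[OF run] by simp
  moreover have "ep \<in> vis"
    using gs_steps_visited_mono[OF run] by (simp add: gs_init_def)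
  ultimately show ?thesis
    using rtrancl_Restr_closed[OF assms(3)] by blast
qed

end

theorem theorem4p2:
  fixes X :: "(real^'d) set" and E :: "((real^'d) \<times> (real^'d)) set"
    and q :: "real^'d" and N :: "nat \<Rightarrow> real^'d" and n S L k i j :: nat
    and C R vis :: "(real^'d) set"
  assumes "finite X" and "card X = n" and "E \<subseteq> X \<times> X"
    and "bij_betw N {1..n} X"
    and "\<And>a b. 1 \<le> a \<Longrightarrow> a \<le> b \<Longrightarrow> b \<le> n \<Longrightarrow> dist (N a) q \<le> dist (N b) q"
    and "inj_on (\<lambda>x. dist x q) X"
    and "1 \<le> S" and "S \<le> n" and "i \<in> {1..S}" and "j \<in> {1..S}"
    and "(N i, N j) \<in> (NG_edges E N S)\<^sup>*"
    and "S \<le> L" and "k \<le> L"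
    and "(gs_step E (\<lambda>x. dist x q) L)\<^sup>*\<^sup>* (gs_init (N i)) (Done C R vis)"
  shows "N j \<in> vis"
proof -
  interpret greedy_search_near_set X E "\<lambda>x. dist x q" L "N ` {1..S}"
  proof
    show "card (N ` {1..S}) \<le> L"
      using card_image_le[of "{1..S}" N] assms(12) by simp
    show "\<And>x y. x \<in> X - N ` {1..S} \<Longrightarrow> y \<in> N ` {1..S} \<Longrightarrow> dist y q < dist x q"
      using sorted_enumeration_prefix_closer[OF assms(4,5,6,8)] by blast
  qed (use assms(1,3) in auto)
  have "N i \<in> X"
    using assms(4,8,9) by (auto simp: bij_betw_def)
  then show ?thesis
    using greedy_search_visits_near_reachable assms(11,14)
    by (simp add: NG_edges_def NG_vertices_def)
qed

end
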